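(* Let $n\ge1$ and $\ell\ge1$, and let $\mathcal{R}_{\ell,e}(\mathcal{C}_{n,A})$ be the set of regions of $\mathcal{C}_{n,A}$ of level $\ell$ contained in $\{x_1>x_2>\dots>x_n\}$. For $\Delta\in\mathcal{R}_{\ell,e}(\mathcal{C}_{n,A})$ and $\bm x\in\Delta$, the set $K=\{k\in[n-1]:x_k-x_{k+1}>a_1\}$ has exactly $\ell-1$ elements $i_1<\dots<i_{\ell-1}$; put $i_0=0$, $i_\ell=n$, $n_j=i_j-i_{j-1}$, and let $\Delta_j$ be the region of $\mathcal{C}_{n_j,A}$ containing $(x_{i_{j-1}+1},\dots,x_{i_j})$. Then $\varphi_\ell(\Delta)=(\Delta_1,\dots,\Delta_\ell)$ is independent of the choice of $\bm x\in\Delta$, each $\Delta_j$ lies in $\mathcal{R}_{1,e}(\mathcal{C}_{n_j,A})$, and \[\varphi_\ell:\mathcal{R}_{\ell,e}(\mathcal{C}_{n,A})\longrightarrow\bigsqcup_{\substack{n_1+\dots+n_\ell=n\\ n_1,\dots,n_\ell>0}}\mathcal{R}_{1,e}(\mathcal{C}_{n_1,A})\times\cdots\times\mathcal{R}_{1,e}(\mathcal{C}_{n_\ell,A})\] is a bijection.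
   Context: Let $A=\{a_1,\dots,a_m\}$ with $a_1>\dots>a_m>0$; for $n\ge1$, $\mathcal{C}_{n,A}$ is the arrangement in $\mathbb{R}^n$ of hyperplanes $x_i-x_j=0$ ($i<j$) and $x_i-x_j=a_k$ ($i\ne j$, $1\le k\le m$) (for $n=1$ it is empty and its unique region $\mathbb{R}$ has level 1); regions are connected components of the complement. The level of $X\subseteq\mathbb{R}^n$ is the smallest integer $\ell\ge0$ such that there are a linear subspace $W$ of dimension $\ell$ and $r>0$ with $X\subseteq\{\bm x:\min_{\bm y\in W}\|\bm x-\bm y\|\le r\}$. *)

theory Defs
  imports "HOL-Analysis.Analysis"
begin

text \<open>Points of R^n are represented as functions nat => real whose coordinates
  0,...,n-1 are the coordinates x_1,...,x_n of the paper and which vanish from n on.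
  The topology is the product topology on nat => real (HOL-Analysis instance),
  which on the carrier Rn n agrees with the Euclidean topology.\<close>

definition Rn :: "nat \<Rightarrow> (nat \<Rightarrow> real) set" where
  "Rn n = {x. \<forall>i\<ge>n. x i = 0}"

definition enorm :: "nat \<Rightarrow> (nat \<Rightarrow> real) \<Rightarrow> real" where
  "enorm n x = sqrt (\<Sum>i<n. (x i)^2)"

definition lin_subspace_dim :: "nat \<Rightarrow> (nat \<Rightarrow> real) set \<Rightarrow> nat \<Rightarrow> bool" where
  "lin_subspace_dim n W l \<longleftrightarrow>
     (\<exists>v :: nat \<Rightarrow> nat \<Rightarrow> real.
        (\<forall>j<l. v j \<in> Rn n) \<and>
        (\<forall>c :: nat \<Rightarrow> real. (\<forall>i. (\<Sum>j<l. c j * v j i) = 0) \<longrightarrow> (\<forall>j<l. c j = 0)) \<and>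
        W = {y. \<exists>c :: nat \<Rightarrow> real. y = (\<lambda>i. \<Sum>j<l. c j * v j i)})"

definition level :: "nat \<Rightarrow> (nat \<Rightarrow> real) set \<Rightarrow> nat" where
  "level n X = (LEAST l. \<exists>W r. lin_subspace_dim n W l \<and> r > 0 \<and>
      X \<subseteq> {x. \<exists>y\<in>W. enorm n (\<lambda>i. x i - y i) \<le> r})"

definition hyps :: "real set \<Rightarrow> nat \<Rightarrow> (nat \<Rightarrow> real) set" where
  "hyps A n = {x. (\<exists>i j. i < j \<and> j < n \<and> x i - x j = 0) \<or>
                  (\<exists>i j a. i < n \<and> j < n \<and> i \<noteq> j \<and> a \<in> A \<and> x i - x j = a)}"

definition complement :: "real set \<Rightarrow> nat \<Rightarrow> (nat \<Rightarrow> real) set" where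
  "complement A n = Rn n - hyps A n"

definition regions :: "real set \<Rightarrow> nat \<Rightarrow> (nat \<Rightarrow> real) set set" where
  "regions A n = {connected_component_set (complement A n) x | x. x \<in> complement A n}"

definition region_of :: "real set \<Rightarrow> nat \<Rightarrow> (nat \<Rightarrow> real) \<Rightarrow> (nat \<Rightarrow> real) set" where
  "region_of A n y = (THE D. D \<in> regions A n \<and> y \<in> D)"

definition dominant :: "nat \<Rightarrow> (nat \<Rightarrow> real) set" where
  "dominant n = {x. \<forall>i. i + 1 < n \<longrightarrow> x i > x (i + 1)}"

definition Rle :: "real set \<Rightarrow> nat \<Rightarrow> nat \<Rightarrow> (nat \<Rightarrow> real) set set" where
  "Rle A n l = {D \<in> regions A n. level n D = l \<and> D \<subseteq> dominant n}"

text \<open>K = {k in [n-1]. x_k - x_{k+1} > a_1}, stored 0-indexed (k0 = k - 1).\<close>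
definition Kset :: "real set \<Rightarrow> nat \<Rightarrow> (nat \<Rightarrow> real) \<Rightarrow> nat set" where
  "Kset A n x = {k. k + 1 < n \<and> x k - x (k + 1) > Max A}"

text \<open>The list i_0 = 0 < i_1 < ... < i_{l-1} < i_l = n.\<close>
definition cuts :: "real set \<Rightarrow> nat \<Rightarrow> (nat \<Rightarrow> real) \<Rightarrow> nat list" where
  "cuts A n x = 0 # map Suc (sorted_list_of_set (Kset A n x)) @ [n]"

text \<open>phi_l applied via the point x: the list of pairs (n_j, Delta_j), j = 1..l.
  Block j is (x_{i_{j-1}+1}, ..., x_{i_j}) viewed as a point of R^{n_j}.\<close>
definition phi_pt :: "real set \<Rightarrow> nat \<Rightarrow> (nat \<Rightarrow> real) \<Rightarrow> (nat \<times> (nat \<Rightarrow> real) set) list" where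
  "phi_pt A n x = (let c = cuts A n x in
     map (\<lambda>j. let nj = c ! (j + 1) - c ! j in
               (nj, region_of A nj (\<lambda>t. if t < nj then x (c ! j + t) else 0)))
         [0..<length c - 1])"

text \<open>The disjoint union over compositions n_1+...+n_l = n (all n_j > 0) of
  R_{1,e}(C_{n_1,A}) x ... x R_{1,e}(C_{n_l,A}); elements are tagged by the n_j.\<close>
definition target :: "real set \<Rightarrow> nat \<Rightarrow> nat \<Rightarrow> (nat \<times> (nat \<Rightarrow> real) set) list set" where
  "target A n l = {ps. length ps = l \<and> sum_list (map fst ps) = n \<and>
      (\<forall>p\<in>set ps. fst p > 0 \<and> snd p \<in> Rle A (fst p) 1)}"

end

theory Submission
  imports Defs
begin

text \<open>Regions of the arrangement are the classes of points with the same signs of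
  x_i - x_j - h for h in {0} \<union> A \<union> -A, so they can be handled combinatorially.
  In a region of the dominant chamber the gaps x_k - x_(k+1) > Max A are the same for every
  point; they cut the coordinates into blocks. Inside a block consecutive coordinates differ
  by at most Max A, while raising the first j blocks never leaves the region. Hence the region
  stays at bounded distance from the span of the block indicators and contains rays along the
  prefix indicators, so its level is the number of blocks. The map to the blocks is injective
  because coordinates in different blocks differ by more than Max A, so the signs inside the
  blocks determine the region; it is surjective because representatives of level-one regions
  can be placed one after another with gaps large enough.\<close>

definition hyp_values :: "real set \<Rightarrow> real set" where
  "hyp_values A = insert 0 (A \<union> uminus ` A)"

lemma hyps_iff:
  "x \<in> hyps A m \<longleftrightarrow> (\<exists>i j. i < j \<and> j < m \<and> x i - x j \<in> hyp_values A)"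
proof
  assume "x \<in> hyps A m"
  then consider i j where "i < j" "j < m" "x i - x j = 0"
    | i j a where "i < m" "j < m" "i \<noteq> j" "a \<in> A" "x i - x j = a"
    unfolding hyps_def by blast
  then show "\<exists>i j. i < j \<and> j < m \<and> x i - x j \<in> hyp_values A"
  proof cases
    case (2 i j a)
    show ?thesis
    proof (cases "i < j")
      case True
      then show ?thesis using 2 by (auto simp: hyp_values_def)
    next
      case False
      then have "j < i" "x j - x i = - a" using 2 by auto
      moreover have "- a \<in> hyp_values A" using 2 by (simp add: hyp_values_def)
      ultimately show ?thesis using 2 by metis
    qed
  qed (auto simp: hyp_values_def)
next
  assume "\<exists>i j. i < j \<and> j < m \<and> x i - x j \<in> hyp_values A"
  then obtain i j where ij: "i < j" "j < m" and "x i - x j \<in> hyp_values A" by blast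
  then consider "x i - x j = 0" | "x i - x j \<in> A" | a where "a \<in> A" "x j - x i = a"
    unfolding hyp_values_def by (auto simp: image_iff)
  then show "x \<in> hyps A m"
  proof cases
    case 3
    have "j < m" "i < m" "j \<noteq> i" using ij by auto
    then show ?thesis using 3 unfolding hyps_def by blast
  next
    case 2
    then show ?thesis using ij less_trans[OF ij] unfolding hyps_def by blast
  qed (use ij in \<open>auto simp: hyps_def\<close>)
qed

definition same_side :: "real set \<Rightarrow> nat \<Rightarrow> (nat \<Rightarrow> real) \<Rightarrow> (nat \<Rightarrow> real) \<Rightarrow> bool" where
  "same_side A m x y \<longleftrightarrow> (\<forall>i j h. i < j \<longrightarrow> j < m \<longrightarrow> h \<in> hyp_values A \<longrightarrow>
     sgn (x i - x j - h) = sgn (y i - y j - h))"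

definition sign_cell :: "real set \<Rightarrow> nat \<Rightarrow> (nat \<Rightarrow> real) \<Rightarrow> (nat \<Rightarrow> real) set" where
  "sign_cell A m x = {y \<in> Rn m. same_side A m x y}"

lemma complement_iff:
  "x \<in> complement A m \<longleftrightarrow> x \<in> Rn m \<and> (\<forall>i j. i < j \<longrightarrow> j < m \<longrightarrow> x i - x j \<notin> hyp_values A)"
  by (auto simp: complement_def hyps_iff)

lemma self_in_sign_cell: "x \<in> Rn m \<Longrightarrow> x \<in> sign_cell A m x"
  by (simp add: sign_cell_def same_side_def)

lemma same_side_sym: "same_side A m x y \<Longrightarrow> same_side A m y x"
  by (simp add: same_side_def)

lemma same_side_trans: "same_side A m x y \<Longrightarrow> same_side A m y z \<Longrightarrow> same_side A m x z"
  by (simp add: same_side_def)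

lemma sign_cell_eq: "y \<in> sign_cell A m x \<Longrightarrow> sign_cell A m y = sign_cell A m x"
  unfolding sign_cell_def by (auto intro: same_side_trans same_side_sym)

lemma sign_cell_subset_complement:
  assumes "x \<in> complement A m"
  shows "sign_cell A m x \<subseteq> complement A m"
proof
  fix y assume y: "y \<in> sign_cell A m x"
  have "y i - y j \<notin> hyp_values A" if "i < j" "j < m" for i j
  proof
    assume h: "y i - y j \<in> hyp_values A"
    then have "sgn (x i - x j - (y i - y j)) = 0"
      using y that by (simp add: sign_cell_def same_side_def)
    then have "x i - x j = y i - y j" by (simp add: sgn_0_0)
    then show False using h assms that unfolding complement_iff by metis
  qed
  then show "y \<in> complement A m" using y by (simp add: complement_iff sign_cell_def)
qed

lemma sgn_convex_combination:
  fixes d e t :: real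
  assumes "sgn d = sgn e" "0 \<le> t" "t \<le> 1"
  shows "sgn ((1 - t) * d + t * e) = sgn d"
proof -
  consider "d > 0" "e > 0" | "d < 0" "e < 0" | "d = 0" "e = 0" using assms(1)
    by (metis sgn_0_0 sgn_greater sgn_less linorder_neqE_linordered_idom)
  then show ?thesis
  proof cases
    case 1
    have "(1 - t) * - d + t * - e < 0" by (rule convex_bound_lt) (use 1 assms in auto)
    then show ?thesis using 1 by simp
  next
    case 2
    have "(1 - t) * d + t * e < 0" by (rule convex_bound_lt) (use 2 assms in auto)
    then show ?thesis using 2 by simp
  qed simp
qed

lemma sign_cell_subset_component:
  assumes x: "x \<in> complement A m"
  shows "sign_cell A m x \<subseteq> connected_component_set (complement A m) x"
proof
  fix y assume y: "y \<in> sign_cell A m x"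
  define g where "g = (\<lambda>t::real. \<lambda>i. (1 - t) * x i + t * y i)"
  have "continuous_on {0..1} g"
    unfolding g_def by (intro continuous_intros)
  then have "connected (g ` {0..1})"
    by (rule connected_continuous_image) simp
  moreover have "g ` {0..1} \<subseteq> sign_cell A m x"
  proof
    fix z assume "z \<in> g ` {0..1}"
    then obtain t where t: "0 \<le> t" "t \<le> 1" and z: "z = g t" by auto
    have "x \<in> Rn m" "y \<in> Rn m" using x y by (auto simp: complement_def sign_cell_def)
    then have "z \<in> Rn m" unfolding z g_def Rn_def by simp
    moreover have "same_side A m x z"
      unfolding same_side_def
    proof (intro allI impI)
      fix i j h assume "i < j" "j < m" "h \<in> hyp_values A"
      then have s: "sgn (x i - x j - h) = sgn (y i - y j - h)"
        using y by (simp add: sign_cell_def same_side_def)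
      have "z i - z j - h = (1 - t) * (x i - x j - h) + t * (y i - y j - h)"
        unfolding z g_def by (simp add: algebra_simps)
      then show "sgn (x i - x j - h) = sgn (z i - z j - h)"
        using sgn_convex_combination[OF s t] by simp
    qed
    ultimately show "z \<in> sign_cell A m x" by (simp add: sign_cell_def)
  qed
  moreover have "x \<in> g ` {0..1}" by (rule image_eqI[of _ _ 0]) (auto simp: g_def)
  moreover have "y \<in> g ` {0..1}" by (rule image_eqI[of _ _ 1]) (auto simp: g_def)
  ultimately show "y \<in> connected_component_set (complement A m) x"
    unfolding connected_component_def using sign_cell_subset_complement[OF x] by blast
qed

lemma component_subset_sign_cell:
  "connected_component_set (complement A m) x \<subseteq> sign_cell A m x"
proof
  fix y assume "y \<in> connected_component_set (complement A m) x"
  then obtain T where T: "connected T" "T \<subseteq> complement A m" "x \<in> T" "y \<in> T"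
    unfolding connected_component_def by blast
  have "same_side A m x y"
    unfolding same_side_def
  proof (intro allI impI)
    fix i j h assume ij: "i < j" "j < m" "h \<in> hyp_values A"
    define f where "f = (\<lambda>z::nat\<Rightarrow>real. z i - z j - h)"
    have "continuous_on T f" unfolding f_def
      by (intro continuous_intros continuous_on_subset[OF continuous_on_product_coordinates]) auto
    then have conn: "connected (f ` T)" using T(1) connected_continuous_image by blast
    have nz: "f z \<noteq> 0" if "z \<in> T" for z
    proof -
      have "z i - z j \<notin> hyp_values A" using T(2) that ij by (auto simp: complement_iff)
      then show ?thesis using ij(3) by (auto simp: f_def)
    qed
    have "sgn (f x) = sgn (f y)"
    proof (rule ccontr)
      assume "sgn (f x) \<noteq> sgn (f y)"
      then have "f x < 0 \<and> f y > 0 \<or> f x > 0 \<and> f y < 0" using nz T(3,4)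
        by (metis linorder_neqE_linordered_idom sgn_neg sgn_pos)
      then have "0 \<in> f ` T"
        using conn T(3,4) unfolding connected_iff_interval by (metis imageI less_eq_real_def)
      then show False using nz by auto
    qed
    then show "sgn (x i - x j - h) = sgn (y i - y j - h)" by (simp add: f_def)
  qed
  then show "y \<in> sign_cell A m x" using T by (auto simp: complement_def sign_cell_def)
qed

lemma component_eq_sign_cell:
  "x \<in> complement A m \<Longrightarrow> connected_component_set (complement A m) x = sign_cell A m x"
  using component_subset_sign_cell sign_cell_subset_component by blast

lemma regions_eq_sign_cells: "regions A m = sign_cell A m ` complement A m"
proof -
  have "regions A m = {sign_cell A m x | x. x \<in> complement A m}"
    unfolding regions_def using component_eq_sign_cell by blast
  then show ?thesis by blast
qed

lemma region_of_eq_sign_cell: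
  assumes "y \<in> complement A m"
  shows "region_of A m y = sign_cell A m y"
  unfolding region_of_def
proof (rule the_equality)
  show "sign_cell A m y \<in> regions A m \<and> y \<in> sign_cell A m y"
    using assms by (auto simp: regions_eq_sign_cells complement_def intro: self_in_sign_cell)
next
  fix D assume "D \<in> regions A m \<and> y \<in> D"
  then show "D = sign_cell A m y" by (auto simp: regions_eq_sign_cells dest: sign_cell_eq)
qed

lemma strict_sorted_nth_less_iff:
  assumes "sorted_wrt (<) (c::nat list)" "i < length c" "j < length c"
  shows "c ! i < c ! j \<longleftrightarrow> i < j"
proof -
  have "i < j \<Longrightarrow> c ! i < c ! j" "j < i \<Longrightarrow> c ! j < c ! i"
    using assms sorted_wrt_nth_less by blast+
  then show ?thesis by (metis less_asym' linorder_neqE_nat)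
qed

lemma strict_sorted_nth_le_iff:
  assumes "sorted_wrt (<) (c::nat list)" "i < length c" "j < length c"
  shows "c ! i \<le> c ! j \<longleftrightarrow> i \<le> j"
  using strict_sorted_nth_less_iff[OF assms(1,3,2)] by (simp add: not_less[symmetric])

lemma sum_nth_diffs:
  assumes "sorted (c::nat list)" "j < length c"
  shows "(\<Sum>t<j. c ! Suc t - c ! t) = c ! j - c ! 0"
  using assms(2)
proof (induction j)
  case (Suc j)
  have "c ! 0 \<le> c ! j" "c ! j \<le> c ! Suc j"
    using sorted_nth_mono[OF assms(1)] Suc.prems by auto
  then show ?case using Suc by simp
qed simp

definition in_block :: "nat list \<Rightarrow> nat \<Rightarrow> nat \<Rightarrow> bool" where
  "in_block c j i \<longleftrightarrow> Suc j < length c \<and> c ! j \<le> i \<and> i < c ! Suc j"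

lemma in_block_mono:
  assumes "sorted_wrt (<) c" "in_block c ja a" "in_block c jb b" "a \<le> b"
  shows "ja \<le> jb"
proof (rule ccontr)
  assume "\<not> ja \<le> jb"
  then have "c ! Suc jb \<le> c ! ja"
    using assms strict_sorted_nth_le_iff[OF assms(1), of "Suc jb" ja] by (simp add: in_block_def)
  then show False using assms by (simp add: in_block_def)
qed

lemma in_block_unique:
  "sorted_wrt (<) c \<Longrightarrow> in_block c j i \<Longrightarrow> in_block c j' i \<Longrightarrow> j = j'"
  using in_block_mono[of c j i j' i] in_block_mono[of c j' i j i] by simp

lemma in_block_exists:
  assumes "sorted_wrt (<) (c::nat list)" "c \<noteq> []" "c ! 0 \<le> i" "i < last c"
  shows "\<exists>j. in_block c j i"
  using assms unfolding in_block_def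
proof (induction c)
  case (Cons x xs)
  show ?case
  proof (cases "i < xs ! 0")
    case True
    have "xs \<noteq> []" using Cons.prems by auto
    then show ?thesis using Cons.prems True by (intro exI[of _ 0]) simp
  next
    case False
    have "xs \<noteq> []" using Cons.prems by auto
    then obtain j where "Suc j < length xs" "xs ! j \<le> i" "i < xs ! Suc j"
      using Cons.IH Cons.prems False by auto
    then show ?thesis by (intro exI[of _ "Suc j"]) simp
  qed
qed simp

lemma sum_in_block:
  assumes "sorted_wrt (<) c" "in_block c j0 i" "length c = Suc l"
  shows "(\<Sum>j<l. if in_block c j i then g j else 0) = g j0"
proof -
  have "in_block c j i \<longleftrightarrow> j = j0" for j
    using in_block_unique[OF assms(1,2), of j] assms(2) by blast
  then have "(\<Sum>j<l. if in_block c j i then g j else 0) = (\<Sum>j<l. if j = j0 then g j else 0)"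
    by simp
  also have "\<dots> = g j0" using assms(2,3) by (simp add: in_block_def)
  finally show ?thesis .
qed

lemma not_in_set_in_block:
  assumes "sorted_wrt (<) c" "in_block c j i" "c ! j < i"
  shows "i \<notin> set c"
proof
  assume "i \<in> set c"
  then obtain t where t: "t < length c" "c ! t = i" by (auto simp: in_set_conv_nth)
  then have "j < t" "t < Suc j"
    using assms strict_sorted_nth_less_iff[OF assms(1), of _ t]
      strict_sorted_nth_less_iff[OF assms(1), of t] by (auto simp: in_block_def)
  then show False by simp
qed

lemma in_block_Suc_cut_iff:
  assumes "sorted_wrt (<) c" "in_block c ja k" "in_block c jb (Suc k)"
  shows "ja < jb \<longleftrightarrow> Suc k \<in> set c"
proof
  assume "ja < jb"
  then have "c ! Suc ja \<le> c ! jb"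
    using assms strict_sorted_nth_le_iff[OF assms(1), of "Suc ja" jb] by (simp add: in_block_def)
  then have "c ! Suc ja = Suc k" using assms(2,3) by (simp add: in_block_def)
  then show "Suc k \<in> set c" using assms(2) by (metis in_block_def nth_mem)
next
  assume cut: "Suc k \<in> set c"
  have "ja \<le> jb" using in_block_mono[OF assms] by simp
  moreover have "ja \<noteq> jb"
    using not_in_set_in_block[OF assms(1,3)] cut assms(2) by (auto simp: in_block_def)
  ultimately show "ja < jb" by simp
qed

lemma pairwise_by_blocks:
  assumes c: "sorted_wrt (<) c" "c \<noteq> []" "c ! 0 = 0" "last c = n"
    and same: "\<And>j a b. in_block c j a \<Longrightarrow> in_block c j b \<Longrightarrow> a < b \<Longrightarrow> P a b"
    and different: "\<And>ja jb a b. in_block c ja a \<Longrightarrow> in_block c jb b \<Longrightarrow> ja < jb \<Longrightarrow> P a b"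
    and ab: "a < b" "b < n"
  shows "P a b"
proof -
  obtain ja jb where "in_block c ja a" "in_block c jb b"
    using in_block_exists[OF c(1,2)] c(3,4) ab by (metis le0 order.strict_trans)
  moreover from this have "ja \<le> jb" using in_block_mono[OF c(1)] ab by simp
  ultimately show ?thesis
  proof (cases "ja = jb")
    case False
    with \<open>ja \<le> jb\<close> show ?thesis using different[OF \<open>in_block c ja a\<close> \<open>in_block c jb b\<close>] by simp
  qed (use same ab in blast)
qed

definition dotp :: "nat \<Rightarrow> (nat \<Rightarrow> real) \<Rightarrow> (nat \<Rightarrow> real) \<Rightarrow> real" where
  "dotp m f g = (\<Sum>i<m. f i * g i)"

lemma dotp_commute: "dotp m f g = dotp m g f"
  by (simp add: dotp_def mult.commute)

lemma dotp_diff_left: "dotp m (\<lambda>i. f i - g i) u = dotp m f u - dotp m g u"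
  by (simp add: dotp_def sum_subtractf left_diff_distrib)

lemma dotp_add_scaled_left: "dotp m (\<lambda>i. f i + t * g i) u = dotp m f u + t * dotp m g u"
  by (simp add: dotp_def sum.distrib distrib_right sum_distrib_left mult.assoc)

lemma dotp_sum_left: "dotp m (\<lambda>i. \<Sum>j\<in>J. d j * g j i) u = (\<Sum>j\<in>J. d j * dotp m (g j) u)"
  unfolding dotp_def by (simp add: sum_distrib_right sum_distrib_left mult.assoc sum.swap[of _ J])

lemma dotp_self_eq_0_iff: "dotp m u u = 0 \<longleftrightarrow> (\<forall>i<m. u i = 0)"
  unfolding dotp_def by (auto simp: sum_nonneg_eq_0_iff)

lemma abs_le_enorm:
  assumes "i < m"
  shows "\<bar>z i\<bar> \<le> enorm m z"
proof -
  have "(z i)\<^sup>2 \<le> (\<Sum>i<m. (z i)\<^sup>2)"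
    using assms by (intro member_le_sum) auto
  then show ?thesis unfolding enorm_def by (metis real_sqrt_abs real_sqrt_le_mono)
qed

lemma homogeneous_system_nontrivial_solution:
  fixes M :: "nat \<Rightarrow> nat \<Rightarrow> real"
  shows "finite J \<Longrightarrow> k < card J \<Longrightarrow>
    \<exists>d. (\<exists>j\<in>J. d j \<noteq> 0) \<and> (\<forall>t<k. (\<Sum>j\<in>J. M t j * d j) = 0)"
proof (induction k arbitrary: J M)
  case 0
  then show ?case by (intro exI[of _ "\<lambda>_. 1"]) (auto simp: card_gt_0_iff)
next
  case (Suc k)
  show ?case
  proof (cases "\<forall>j\<in>J. M k j = 0")
    case True
    obtain d where d: "\<exists>j\<in>J. d j \<noteq> 0" "\<forall>t<k. (\<Sum>j\<in>J. M t j * d j) = 0"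
      using Suc.IH[of J M] Suc.prems by auto
    have "(\<Sum>j\<in>J. M k j * d j) = 0" using True by simp
    then have "\<forall>t<Suc k. (\<Sum>j\<in>J. M t j * d j) = 0" using d(2) less_Suc_eq by auto
    then show ?thesis using d(1) by blast
  next
    case False
    then obtain j0 where j0: "j0 \<in> J" "M k j0 \<noteq> 0" by blast
    \<comment> \<open>Gaussian elimination: use equation k to eliminate the unknown j0\<close>
    define J' where "J' = J - {j0}"
    define M' where "M' = (\<lambda>t j. M t j - M t j0 * M k j / M k j0)"
    have "finite J'" "k < card J'" using Suc.prems j0 by (auto simp: J'_def)
    then obtain d' where d': "\<exists>j\<in>J'. d' j \<noteq> 0" "\<forall>t<k. (\<Sum>j\<in>J'. M' t j * d' j) = 0"
      using Suc.IH by blast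
    define d where "d = (\<lambda>j. if j = j0 then - (\<Sum>j\<in>J'. M k j * d' j) / M k j0 else d' j)"
    have split: "(\<Sum>j\<in>J. M t j * d j) = M t j0 * d j0 + (\<Sum>j\<in>J'. M t j * d' j)" for t
    proof -
      have "(\<Sum>j\<in>J. M t j * d j) = M t j0 * d j0 + (\<Sum>j\<in>J'. M t j * d j)"
        unfolding J'_def using Suc.prems j0 by (simp add: sum.remove)
      moreover have "(\<Sum>j\<in>J'. M t j * d j) = (\<Sum>j\<in>J'. M t j * d' j)"
        by (rule sum.cong) (auto simp: d_def J'_def)
      ultimately show ?thesis by simp
    qed
    have "(\<Sum>j\<in>J. M t j * d j) = 0" if "t < Suc k" for t
    proof (cases "t = k")
      case False
      have "(\<Sum>j\<in>J'. M' t j * d' j) =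
          (\<Sum>j\<in>J'. M t j * d' j) - M t j0 / M k j0 * (\<Sum>j\<in>J'. M k j * d' j)"
        unfolding M'_def by (simp add: sum_subtractf sum_distrib_left algebra_simps)
      then show ?thesis using d' False that split[of t] j0 by (simp add: d_def)
    qed (use split j0 in \<open>simp add: d_def\<close>)
    moreover have "\<exists>j\<in>J. d j \<noteq> 0" using d' by (auto simp: d_def J'_def)
    ultimately show ?thesis by blast
  qed
qed

lemma bounded_on_ray_imp_slope_zero:
  fixes a q B :: real
  assumes "\<forall>t\<ge>0. \<bar>a + t * q\<bar> \<le> B"
  shows "q = 0"
proof (rule ccontr)
  assume q: "q \<noteq> 0"
  define t where "t = (B + \<bar>a\<bar> + 1) / \<bar>q\<bar>"
  have "B \<ge> 0" using assms[rule_format, of 0] by simp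
  then have t0: "t \<ge> 0" using q by (simp add: t_def)
  have "\<bar>t * q\<bar> = B + \<bar>a\<bar> + 1" using q t0 by (simp add: t_def abs_mult)
  then show False using assms[rule_format, OF t0] by linarith
qed

definition near_subspace :: "nat \<Rightarrow> (nat \<Rightarrow> real) set \<Rightarrow> nat \<Rightarrow> bool" where
  "near_subspace m X l \<longleftrightarrow> (\<exists>W r. lin_subspace_dim m W l \<and> r > 0 \<and>
      X \<subseteq> {x. \<exists>y\<in>W. enorm m (\<lambda>i. x i - y i) \<le> r})"

lemma level_eqI:
  "near_subspace m X l \<Longrightarrow> (\<And>k. near_subspace m X k \<Longrightarrow> l \<le> k) \<Longrightarrow> level m X = l"
  unfolding level_def near_subspace_def[symmetric] by (rule Least_equality)

lemma near_subspaceI: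
  assumes "\<forall>j<l. b j \<in> Rn m"
    and "\<forall>cc. (\<forall>i. (\<Sum>j<l. cc j * b j i) = 0) \<longrightarrow> (\<forall>j<l. cc j = 0)"
    and near: "\<And>p. p \<in> X \<Longrightarrow> \<exists>cc. \<forall>i<m. \<bar>p i - (\<Sum>j<l. cc j * b j i)\<bar> \<le> \<delta>"
  shows "near_subspace m X l"
proof -
  define W where "W = {y. \<exists>cc :: nat \<Rightarrow> real. y = (\<lambda>i. \<Sum>j<l. cc j * b j i)}"
  have W: "lin_subspace_dim m W l" unfolding lin_subspace_dim_def W_def using assms(1,2) by blast
  define r where "r = sqrt (real m * \<delta>\<^sup>2) + 1"
  have r: "r > 0" unfolding r_def by (simp add: add_nonneg_pos)
  have "\<exists>y\<in>W. enorm m (\<lambda>i. p i - y i) \<le> r" if p: "p \<in> X" for p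
  proof -
    obtain cc where cc: "\<forall>i<m. \<bar>p i - (\<Sum>j<l. cc j * b j i)\<bar> \<le> \<delta>" using near[OF p] by blast
    define y where "y = (\<lambda>i. \<Sum>j<l. cc j * b j i)"
    have "(p i - y i)\<^sup>2 \<le> \<delta>\<^sup>2" if i: "i < m" for i
    proof -
      have "\<bar>p i - y i\<bar> \<le> \<delta>" using cc i by (simp add: y_def)
      then have "\<bar>p i - y i\<bar>\<^sup>2 \<le> \<delta>\<^sup>2" by (rule power_mono) simp
      then show ?thesis by simp
    qed
    then have "(\<Sum>i<m. (p i - y i)\<^sup>2) \<le> real m * \<delta>\<^sup>2"
      using sum_mono[of "{..<m}" "\<lambda>i. (p i - y i)\<^sup>2" "\<lambda>_. \<delta>\<^sup>2"] by simp
    then have "enorm m (\<lambda>i. p i - y i) \<le> sqrt (real m * \<delta>\<^sup>2)"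
      unfolding enorm_def by (rule real_sqrt_le_mono)
    then have "enorm m (\<lambda>i. p i - y i) \<le> r" by (simp add: r_def)
    moreover have "y \<in> W" unfolding W_def y_def by blast
    ultimately show ?thesis by blast
  qed
  then show ?thesis unfolding near_subspace_def using W r by blast
qed

lemma nonzero_combination_orthogonal_to_span:
  fixes k l :: nat
  assumes "k < l"
  shows "\<exists>d. (\<exists>j<l. d j \<noteq> 0) \<and>
    (\<forall>cc. dotp m (\<lambda>i. \<Sum>t<k. cc t * v t i) (\<lambda>i. \<Sum>j<l. d j * f j i) = 0)"
proof -
  obtain d where d: "\<exists>j\<in>{..<l}. d j \<noteq> 0"
      "\<forall>t<k. (\<Sum>j\<in>{..<l}. dotp m (f j) (v t) * d j) = 0"
    using homogeneous_system_nontrivial_solution[of "{..<l}" k "\<lambda>t j. dotp m (f j) (v t)"] assms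
    by auto
  have "dotp m (v t) (\<lambda>i. \<Sum>j<l. d j * f j i) = 0" if "t < k" for t
    using d(2) that by (simp add: dotp_commute[of m "v t"] dotp_sum_left mult.commute)
  then have "dotp m (\<lambda>i. \<Sum>t<k. cc t * v t i) (\<lambda>i. \<Sum>j<l. d j * f j i) = 0" for cc
    by (simp add: dotp_sum_left)
  then show ?thesis using d(1) by blast
qed

lemma abs_dotp_le_near:
  assumes "enorm m (\<lambda>i. p i - w i) \<le> r" "dotp m w u = 0"
  shows "\<bar>dotp m p u\<bar> \<le> r * (\<Sum>i<m. \<bar>u i\<bar>)"
proof -
  have "dotp m p u = dotp m (\<lambda>i. p i - w i) u" using dotp_diff_left[of m p w u] assms(2) by simp
  also have "\<bar>\<dots>\<bar> \<le> (\<Sum>i<m. \<bar>(p i - w i) * u i\<bar>)" unfolding dotp_def by (rule sum_abs)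
  also have "\<dots> \<le> (\<Sum>i<m. r * \<bar>u i\<bar>)"
  proof (rule sum_mono)
    fix i assume "i \<in> {..<m}"
    then have "\<bar>p i - w i\<bar> \<le> r" using abs_le_enorm[of i m "\<lambda>i. p i - w i"] assms(1) by simp
    then show "\<bar>(p i - w i) * u i\<bar> \<le> r * \<bar>u i\<bar>" by (simp add: abs_mult mult_right_mono)
  qed
  finally show ?thesis by (simp add: sum_distrib_left)
qed

text \<open>A nonzero vector in the span of the rays that is orthogonal to the subspace has bounded
  inner product along each ray, hence is orthogonal to all rays and so to itself.\<close>

lemma near_subspace_rays_le:
  assumes near: "near_subspace m X k"
    and indep: "\<forall>cc. (\<forall>i<m. (\<Sum>j<l. cc j * f j i) = 0) \<longrightarrow> (\<forall>j<l. cc j = 0)"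
    and rays: "\<And>j t. j < l \<Longrightarrow> 0 \<le> t \<Longrightarrow> (\<lambda>i. x i + t * f j i) \<in> X"
  shows "l \<le> k"
proof (rule ccontr)
  assume "\<not> l \<le> k"
  obtain W r where "lin_subspace_dim m W k"
    and sub: "X \<subseteq> {x. \<exists>y\<in>W. enorm m (\<lambda>i. x i - y i) \<le> r}"
    using near unfolding near_subspace_def by blast
  then obtain v where v: "W = {y. \<exists>cc. y = (\<lambda>i. \<Sum>t<k. cc t * v t i)}"
    unfolding lin_subspace_dim_def by blast
  obtain d where d: "\<exists>j<l. d j \<noteq> 0"
    and orth: "\<And>cc. dotp m (\<lambda>i. \<Sum>t<k. cc t * v t i) (\<lambda>i. \<Sum>j<l. d j * f j i) = 0"
    using nonzero_combination_orthogonal_to_span[of k l m v f] \<open>\<not> l \<le> k\<close> by auto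
  define u where "u = (\<lambda>i. \<Sum>j<l. d j * f j i)"
  have bounded: "\<bar>dotp m p u\<bar> \<le> r * (\<Sum>i<m. \<bar>u i\<bar>)" if p: "p \<in> X" for p
  proof -
    obtain cc where "enorm m (\<lambda>i. p i - (\<Sum>t<k. cc t * v t i)) \<le> r"
      using sub p unfolding v by blast
    then show ?thesis unfolding u_def by (rule abs_dotp_le_near[OF _ orth])
  qed
  have "dotp m (f j) u = 0" if "j < l" for j
  proof (rule bounded_on_ray_imp_slope_zero, intro allI impI)
    fix t :: real assume "0 \<le> t"
    then show "\<bar>dotp m x u + t * dotp m (f j) u\<bar> \<le> r * (\<Sum>i<m. \<bar>u i\<bar>)"
      using bounded[OF rays[OF that]] by (simp only: dotp_add_scaled_left)
  qed
  then have "dotp m u u = 0" by (simp add: u_def dotp_sum_left)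
  then have "\<forall>j<l. d j = 0" using indep by (simp add: dotp_self_eq_0_iff u_def)
  then show False using d by blast
qed

lemma zero_in_hyp_values: "0 \<in> hyp_values A"
  by (simp add: hyp_values_def)

lemma sign_cell_subset_dominant:
  assumes "x \<in> dominant m"
  shows "sign_cell A m x \<subseteq> dominant m"
proof
  fix p assume p: "p \<in> sign_cell A m x"
  have "p i > p (i + 1)" if "i + 1 < m" for i
  proof -
    have "same_side A m x p" using p by (simp add: sign_cell_def)
    then have "sgn (x i - x (i + 1) - 0) = sgn (p i - p (i + 1) - 0)"
      using that zero_in_hyp_values[of A] unfolding same_side_def by (metis less_add_one)
    moreover have "x i > x (i + 1)" using assms that by (simp add: dominant_def)
    ultimately show ?thesis by (metis diff_0_right diff_gt_0_iff_gt sgn_pos sgn_greater)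
  qed
  then show "p \<in> dominant m" by (simp add: dominant_def)
qed

lemma dominant_antimono: "x \<in> dominant m \<Longrightarrow> a \<le> b \<Longrightarrow> b < m \<Longrightarrow> x b \<le> x a"
proof (induction b)
  case (Suc b)
  then show ?case by (cases "a = Suc b") (auto simp: dominant_def intro: order.trans[of _ "x b"])
qed simp

lemma Kset_separates:
  assumes "x \<in> dominant m" "k \<in> Kset A m x" "a \<le> k" "k < b" "b < m"
  shows "x a - x b > Max A"
proof -
  have "x k - x (k + 1) > Max A" using assms(2) by (simp add: Kset_def)
  moreover have "x k \<le> x a" "x b \<le> x (k + 1)"
    using dominant_antimono[OF assms(1)] assms(3-5) by auto
  ultimately show ?thesis by simp
qed

lemma finite_Kset: "finite (Kset A m x)"
  unfolding Kset_def by (rule finite_subset[of _ "{..<m}"]) auto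

lemma length_cuts: "length (cuts A m x) = card (Kset A m x) + 2"
  using finite_Kset by (simp add: cuts_def)

lemma set_cuts: "set (cuts A m x) = insert 0 (insert m (Suc ` Kset A m x))"
  using finite_Kset by (auto simp: cuts_def)

lemma cuts_nth_0: "cuts A m x ! 0 = 0"
  by (simp add: cuts_def)

lemma last_cuts: "last (cuts A m x) = m"
  by (simp add: cuts_def)

lemma cuts_nonempty: "cuts A m x \<noteq> []"
  by (simp add: cuts_def)

lemma sorted_cuts:
  assumes "m \<ge> 1"
  shows "sorted_wrt (<) (cuts A m x)"
proof -
  have "sorted_wrt (<) (map Suc (sorted_list_of_set (Kset A m x)))"
    by (simp add: sorted_wrt_map)
  moreover have "\<forall>v\<in>set (map Suc (sorted_list_of_set (Kset A m x))). 0 < v \<and> v < m"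
    using finite_Kset by (auto simp: Kset_def)
  ultimately show ?thesis using assms by (simp add: cuts_def sorted_wrt_append)
qed

lemma cuts_nth_le:
  assumes "m \<ge> 1" "j < length (cuts A m x)"
  shows "cuts A m x ! j \<le> m"
proof -
  let ?c = "cuts A m x"
  have "?c ! (length ?c - 1) = m" using last_cuts cuts_nonempty by (metis last_conv_nth)
  moreover have "j \<le> length ?c - 1" using assms(2) by simp
  ultimately show ?thesis
    using strict_sorted_nth_le_iff[OF sorted_cuts[OF assms(1)] assms(2), of "length ?c - 1"]
    using assms(2) by simp
qed

lemma Kset_iff_cut: "k \<in> Kset A m x \<longleftrightarrow> k + 1 < m \<and> Suc k \<in> set (cuts A m x)"
proof -
  have "Suc k \<in> set (cuts A m x) \<longleftrightarrow> Suc k = m \<or> k \<in> Kset A m x"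
    unfolding set_cuts by auto
  then show ?thesis by (auto simp: Kset_def)
qed

lemma not_Kset_in_block:
  assumes "m \<ge> 1" "in_block (cuts A m x) j k" "in_block (cuts A m x) j (Suc k)"
  shows "k \<notin> Kset A m x"
  using in_block_Suc_cut_iff[OF sorted_cuts[OF assms(1)] assms(2,3)] Kset_iff_cut by simp

lemma cuts_blocks_separated:
  assumes "m \<ge> 1" "x \<in> dominant m" "in_block (cuts A m x) ja a" "in_block (cuts A m x) jb b"
    "ja < jb"
  shows "x a - x b > Max A"
proof -
  let ?c = "cuts A m x"
  have c: "sorted_wrt (<) ?c" by (rule sorted_cuts[OF assms(1)])
  have "?c ! Suc ja \<le> ?c ! jb"
    using assms(3-5) strict_sorted_nth_le_iff[OF c, of "Suc ja" jb] by (simp add: in_block_def)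
  moreover have "?c ! jb < m"
    using assms(4) cuts_nth_le[OF assms(1), of "Suc jb" A x] by (simp add: in_block_def)
  ultimately have "?c ! Suc ja \<in> set ?c - {0, m}"
    using assms(3) by (auto simp: in_block_def)
  then obtain k where k: "k \<in> Kset A m x" "?c ! Suc ja = Suc k" using set_cuts by auto
  have "a \<le> k" "k < b"
    using k(2) assms(3,4) \<open>?c ! Suc ja \<le> ?c ! jb\<close> by (auto simp: in_block_def)
  moreover have "b < m"
    using assms(4) cuts_nth_le[OF assms(1), of "Suc jb" A x] by (auto simp: in_block_def)
  ultimately show ?thesis by (rule Kset_separates[OF assms(2) k(1)])
qed

locale catalan_deformation =
  fixes A :: "real set"
  assumes finite_A: "finite A" and nonempty_A: "A \<noteq> {}" and positive_A: "\<forall>a\<in>A. a > 0"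
begin

lemma Max_A_pos: "Max A > 0"
  using finite_A nonempty_A positive_A by auto

lemma Max_A_in_hyp_values: "Max A \<in> hyp_values A"
  using finite_A nonempty_A by (simp add: hyp_values_def)

lemma abs_hyp_value_le:
  assumes "h \<in> hyp_values A"
  shows "\<bar>h\<bar> \<le> Max A"
proof -
  have "\<bar>a\<bar> \<le> Max A" if "a \<in> A" for a
  proof -
    have "a \<le> Max A" "a > 0" using that finite_A positive_A by auto
    then show ?thesis by simp
  qed
  then show ?thesis using assms Max_A_pos unfolding hyp_values_def by auto
qed

lemma sgn_diff_hyp_value: "d > Max A \<Longrightarrow> h \<in> hyp_values A \<Longrightarrow> sgn (d - h) = 1"
  using abs_hyp_value_le[of h] by simp

lemma Kset_same_side:
  assumes "same_side A m x y"
  shows "Kset A m x = Kset A m y"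
proof -
  have "x k - x (k + 1) > Max A \<longleftrightarrow> y k - y (k + 1) > Max A" if "k + 1 < m" for k
  proof -
    have "sgn (x k - x (k + 1) - Max A) = sgn (y k - y (k + 1) - Max A)"
      using assms that Max_A_in_hyp_values unfolding same_side_def by simp
    then show ?thesis by (metis diff_gt_0_iff_gt sgn_pos sgn_greater)
  qed
  then show ?thesis unfolding Kset_def by auto
qed

end

definition block_indicator :: "nat list \<Rightarrow> nat \<Rightarrow> nat \<Rightarrow> real" where
  "block_indicator c j i = (if in_block c j i then 1 else 0)"

definition prefix_indicator :: "nat list \<Rightarrow> nat \<Rightarrow> nat \<Rightarrow> real" where
  "prefix_indicator c j i = (if i < c ! Suc j then 1 else 0)"

lemma mult_block_indicator: "a * block_indicator c j i = (if in_block c j i then a else 0)"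
  by (simp add: block_indicator_def)

lemma mult_prefix_indicator: "a * prefix_indicator c j i = (if i < c ! Suc j then a else 0)"
  by (simp add: prefix_indicator_def)

lemma block_indicators_independent:
  assumes "sorted_wrt (<) c" "length c = Suc l"
  shows "\<forall>cc. (\<forall>i. (\<Sum>j<l. cc j * block_indicator c j i) = 0) \<longrightarrow> (\<forall>j<l. cc j = 0)"
proof (intro allI impI)
  fix cc t assume h: "\<forall>i. (\<Sum>j<l. cc j * block_indicator c j i) = 0" and t: "t < l"
  have "in_block c t (c ! t)"
    using strict_sorted_nth_less_iff[OF assms(1), of t "Suc t"] assms(2) t by (simp add: in_block_def)
  then have "(\<Sum>j<l. if in_block c j (c ! t) then cc j else 0) = cc t"
    by (rule sum_in_block[OF assms(1) _ assms(2)])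
  then show "cc t = 0" using h[rule_format, of "c ! t"] by (simp add: mult_block_indicator)
qed

lemma prefix_indicators_independent:
  assumes "sorted_wrt (<) c" "length c = Suc l" "\<forall>j<l. c ! j < m"
  shows "\<forall>cc. (\<forall>i<m. (\<Sum>j<l. cc j * prefix_indicator c j i) = 0) \<longrightarrow> (\<forall>j<l. cc j = 0)"
proof (intro allI impI)
  fix cc j assume h: "\<forall>i<m. (\<Sum>j<l. cc j * prefix_indicator c j i) = 0" and j: "j < l"
  \<comment> \<open>evaluating at the cut point c ! t isolates the suffix sum of the coefficients from t on\<close>
  have suffix: "(\<Sum>k\<in>{t..<l}. cc k) = 0" if "t < l" for t
  proof -
    have "c ! t < c ! Suc k \<longleftrightarrow> t \<le> k" if "k < l" for k
      using strict_sorted_nth_less_iff[OF assms(1), of t "Suc k"] \<open>t < l\<close> that assms(2)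
      by (simp add: less_Suc_eq_le)
    then have "(\<Sum>k<l. cc k * prefix_indicator c k (c ! t)) = (\<Sum>k\<in>{k\<in>{..<l}. t \<le> k}. cc k)"
      by (simp add: mult_prefix_indicator sum.inter_filter[symmetric] cong: if_cong)
    also have "{k\<in>{..<l}. t \<le> k} = {t..<l}" by auto
    finally show ?thesis using h assms(3) that by simp
  qed
  have "cc j = (\<Sum>k\<in>{j..<l}. cc k) - (\<Sum>k\<in>{Suc j..<l}. cc k)"
    using sum.atLeast_Suc_lessThan[OF j, of cc] by simp
  then show "cc j = 0" using suffix[OF j] suffix[of "Suc j"] by (cases "Suc j < l") auto
qed

lemma bounded_steps_drop:
  fixes p :: "nat \<Rightarrow> real"
  assumes "\<forall>k. s \<le> k \<longrightarrow> k < i \<longrightarrow> 0 \<le> p k - p (Suc k) \<and> p k - p (Suc k) \<le> M"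
  shows "s \<le> i \<Longrightarrow> 0 \<le> p s - p i \<and> p s - p i \<le> real (i - s) * M"
  using assms
proof (induction i)
  case (Suc i)
  show ?case
  proof (cases "s = Suc i")
    case False
    then have "s \<le> i" using Suc by simp
    then have "0 \<le> p s - p i \<and> p s - p i \<le> real (i - s) * M"
      and "0 \<le> p i - p (Suc i) \<and> p i - p (Suc i) \<le> M" using Suc by simp_all
    moreover have "real (Suc i - s) = real (i - s) + 1" using \<open>s \<le> i\<close> by simp
    ultimately show ?thesis by (simp add: algebra_simps)
  qed simp
qed simp

context catalan_deformation
begin

text \<open>Raising the blocks 0, ..., j together keeps every difference inside a block and every
  difference across the cut c ! Suc j, which already exceeds Max A, on its side.\<close>

lemma shift_prefix_in_sign_cell:
  assumes m: "m \<ge> 1" and x: "x \<in> complement A m" "x \<in> dominant m"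
    and j: "Suc j < length (cuts A m x)" and t: "t \<ge> 0"
  shows "(\<lambda>i. x i + t * prefix_indicator (cuts A m x) j i) \<in> sign_cell A m x"
proof -
  let ?c = "cuts A m x" and ?y = "\<lambda>i. x i + t * prefix_indicator (cuts A m x) j i"
  define q where "q = ?c ! Suc j"
  have "q \<le> m" using cuts_nth_le[OF m j] by (simp add: q_def)
  then have "?y \<in> Rn m" using x by (auto simp: Rn_def complement_def prefix_indicator_def q_def)
  moreover have "same_side A m x ?y"
    unfolding same_side_def
  proof (intro allI impI)
    fix a b h assume ab: "a < b" "b < m" and h: "h \<in> hyp_values A"
    consider "b < q" | "q \<le> a" | "a < q" "q \<le> b" by linarith
    then show "sgn (x a - x b - h) = sgn (?y a - ?y b - h)"
    proof cases
      case 3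
      have "q \<in> set ?c - {0, m}" using 3 ab j by (auto simp: q_def)
      then obtain k where "k \<in> Kset A m x" "q = Suc k" using set_cuts by auto
      then have sep: "x a - x b > Max A" using Kset_separates[OF x(2)] 3 ab by simp
      have e: "?y a - ?y b - h = (x a - x b + t) - h" using 3 by (simp add: prefix_indicator_def q_def)
      show ?thesis unfolding e using sgn_diff_hyp_value[OF sep h] sgn_diff_hyp_value[of "x a - x b + t" h] sep t h
        by simp
    qed (use ab in \<open>auto simp: prefix_indicator_def q_def\<close>)
  qed
  ultimately show ?thesis by (simp add: sign_cell_def)
qed

lemma sign_cell_near_blocks:
  assumes m: "m \<ge> 1" and x: "x \<in> dominant m" and p: "p \<in> sign_cell A m x" and i: "i < m"
  defines "c \<equiv> cuts A m x"
  shows "\<bar>p i - (\<Sum>j<length c - 1. p (c ! j) * block_indicator c j i)\<bar> \<le> real m * Max A"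
proof -
  have ss: "sorted_wrt (<) c" using sorted_cuts[OF m] by (simp add: c_def)
  have pd: "p \<in> dominant m" using sign_cell_subset_dominant[OF x] p by blast
  have K: "Kset A m x = Kset A m p" using p Kset_same_side by (simp add: sign_cell_def)
  obtain j0 where j0: "in_block c j0 i"
    using in_block_exists[OF ss] i cuts_nonempty cuts_nth_0 last_cuts by (fastforce simp: c_def)
  have "(\<Sum>j<length c - 1. p (c ! j) * block_indicator c j i) = p (c ! j0)"
    using sum_in_block[OF ss j0, of "length c - 1" "\<lambda>j. p (c ! j)"] cuts_nonempty[of A m x]
    by (simp add: mult_block_indicator c_def[symmetric])
  moreover have "0 \<le> p (c ! j0) - p i \<and> p (c ! j0) - p i \<le> real (i - c ! j0) * Max A"
  proof (rule bounded_steps_drop, intro allI impI)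
    fix k assume k: "c ! j0 \<le> k" "k < i"
    then have "in_block c j0 k" "in_block c j0 (Suc k)" using j0 by (auto simp: in_block_def)
    then have "k \<notin> Kset A m x" using not_Kset_in_block[OF m] by (simp add: c_def)
    then have "k \<notin> Kset A m p" using K by simp
    then show "0 \<le> p k - p (Suc k) \<and> p k - p (Suc k) \<le> Max A"
      using pd k i by (auto simp: Kset_def dominant_def less_imp_le)
  qed (use j0 in \<open>simp add: in_block_def\<close>)
  moreover have "real (i - c ! j0) * Max A \<le> real m * Max A"
    using i Max_A_pos by (intro mult_right_mono) auto
  ultimately show ?thesis by simp
qed

lemma level_dominant_cell:
  assumes m: "m \<ge> 1" and x: "x \<in> complement A m" "x \<in> dominant m"
  shows "level m (sign_cell A m x) = card (Kset A m x) + 1"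
proof -
  define c where "c = cuts A m x"
  define l where "l = length c - 1"
  have ss: "sorted_wrt (<) c" using sorted_cuts[OF m] by (simp add: c_def)
  have lc: "length c = Suc l" "l = card (Kset A m x) + 1"
    using length_cuts by (simp_all add: c_def l_def)
  have le_m: "c ! j \<le> m" if "j < length c" for j using cuts_nth_le[OF m] that by (simp add: c_def)
  show ?thesis unfolding lc(2)[symmetric]
  proof (rule level_eqI)
    show "near_subspace m (sign_cell A m x) l"
    proof (rule near_subspaceI)
      show "\<forall>j<l. block_indicator c j \<in> Rn m"
        using le_m lc by (force simp: Rn_def block_indicator_def in_block_def)
      show "\<forall>cc. (\<forall>i. (\<Sum>j<l. cc j * block_indicator c j i) = 0) \<longrightarrow> (\<forall>j<l. cc j = 0)"
        by (rule block_indicators_independent[OF ss lc(1)])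
      fix p assume p: "p \<in> sign_cell A m x"
      show "\<exists>cc. \<forall>i<m. \<bar>p i - (\<Sum>j<l. cc j * block_indicator c j i)\<bar> \<le> real m * Max A"
        using sign_cell_near_blocks[OF m x(2) p] by (intro exI[of _ "\<lambda>j. p (c ! j)"]) (simp add: c_def l_def)
    qed
  next
    fix k assume "near_subspace m (sign_cell A m x) k"
    then show "l \<le> k"
    proof (rule near_subspace_rays_le)
      have "c ! j < m" if "j < l" for j
        using strict_sorted_nth_less_iff[OF ss, of j l] le_m[of l] lc(1) that by simp
      then show "\<forall>cc. (\<forall>i<m. (\<Sum>j<l. cc j * prefix_indicator c j i) = 0) \<longrightarrow> (\<forall>j<l. cc j = 0)"
        by (intro prefix_indicators_independent[OF ss lc(1)]) simp
      show "(\<lambda>i. x i + t * prefix_indicator c j i) \<in> sign_cell A m x" if "j < l" "0 \<le> t" for j t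
        using shift_prefix_in_sign_cell[OF m x, of j t] that lc(1) by (simp add: c_def)
    qed
  qed
qed

end

definition segment :: "(nat \<Rightarrow> real) \<Rightarrow> nat \<Rightarrow> nat \<Rightarrow> nat \<Rightarrow> real" where
  "segment x s k = (\<lambda>t. if t < k then x (s + t) else 0)"

lemma phi_pt_conv: "phi_pt A n x = map (\<lambda>j. (cuts A n x ! Suc j - cuts A n x ! j,
    region_of A (cuts A n x ! Suc j - cuts A n x ! j)
      (segment x (cuts A n x ! j) (cuts A n x ! Suc j - cuts A n x ! j))))
    [0..<length (cuts A n x) - 1]"
  by (simp add: phi_pt_def Let_def segment_def)

lemma length_phi_pt: "length (phi_pt A n x) = length (cuts A n x) - 1"
  by (simp add: phi_pt_conv)

lemma nth_phi_pt:
  assumes "Suc j < length (cuts A n x)"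
  shows "phi_pt A n x ! j =
    (cuts A n x ! Suc j - cuts A n x ! j,
     region_of A (cuts A n x ! Suc j - cuts A n x ! j)
       (segment x (cuts A n x ! j) (cuts A n x ! Suc j - cuts A n x ! j)))"
proof -
  have "j < length (cuts A n x) - 1" using assms by simp
  then show ?thesis by (simp add: phi_pt_conv)
qed

lemma segment_Rn: "segment x s k \<in> Rn k"
  by (simp add: segment_def Rn_def)

lemma segment_in_block:
  assumes "in_block c j a"
  shows "a - c ! j < c ! Suc j - c ! j" "segment x (c ! j) (c ! Suc j - c ! j) (a - c ! j) = x a"
  using assms by (auto simp: segment_def in_block_def)

lemma same_side_segment:
  assumes "same_side A n x y" "s + k \<le> n"
  shows "same_side A k (segment x s k) (segment y s k)"
  using assms unfolding same_side_def segment_def by auto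

lemma segment_complement:
  assumes "x \<in> complement A n" "s + k \<le> n"
  shows "segment x s k \<in> complement A k"
  using assms segment_Rn unfolding complement_iff segment_def by auto

lemma segment_dominant:
  assumes "x \<in> dominant n" "s + k \<le> n"
  shows "segment x s k \<in> dominant k"
  using assms unfolding dominant_def segment_def by auto

lemma Rle_memD:
  assumes "D \<in> Rle A n l" "x \<in> D"
  shows "x \<in> complement A n" "x \<in> dominant n" "D = sign_cell A n x" "level n D = l"
proof -
  obtain x0 where x0: "x0 \<in> complement A n" "D = sign_cell A n x0"
    using assms(1) by (auto simp: Rle_def regions_eq_sign_cells)
  show "x \<in> complement A n" using sign_cell_subset_complement[OF x0(1)] x0 assms by blast
  show "x \<in> dominant n" "level n D = l" using assms by (auto simp: Rle_def)
  show "D = sign_cell A n x" using sign_cell_eq x0 assms by blast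
qed

lemma Rle_nonempty: "D \<in> Rle A n l \<Longrightarrow> \<exists>x. x \<in> D"
  by (auto simp: Rle_def regions_eq_sign_cells complement_def intro: self_in_sign_cell)

context catalan_deformation
begin

lemma sign_cell_Rle:
  assumes "n \<ge> 1" "x \<in> complement A n" "x \<in> dominant n"
  shows "sign_cell A n x \<in> Rle A n (card (Kset A n x) + 1)"
  using assms sign_cell_subset_dominant level_dominant_cell
  by (auto simp: Rle_def regions_eq_sign_cells)

lemma card_Kset_Rle:
  assumes "n \<ge> 1" "D \<in> Rle A n l" "x \<in> D"
  shows "card (Kset A n x) = l - 1"
  using level_dominant_cell[OF assms(1) Rle_memD(1,2)[OF assms(2,3)]] Rle_memD(3,4)[OF assms(2,3)]
  by simp

lemma segment_region_Rle_1:
  assumes n: "n \<ge> 1" and x: "x \<in> complement A n" "x \<in> dominant n"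
    and j: "Suc j < length (cuts A n x)"
  defines "c \<equiv> cuts A n x"
  defines "k \<equiv> c ! Suc j - c ! j"
  shows "k > 0" "c ! j + k \<le> n" "region_of A k (segment x (c ! j) k) \<in> Rle A k 1"
proof -
  have "c ! j < c ! Suc j"
    using strict_sorted_nth_less_iff[OF sorted_cuts[OF n, of A x], of j "Suc j"] j by (simp add: c_def)
  then show k: "k > 0" "c ! j + k \<le> n" using cuts_nth_le[OF n j] by (auto simp: k_def c_def)
  let ?z = "segment x (c ! j) k"
  have z: "?z \<in> complement A k" "?z \<in> dominant k"
    using segment_complement[OF x(1) k(2)] segment_dominant[OF x(2) k(2)] by auto
  have "t \<notin> Kset A k ?z" for t
  proof
    assume t: "t \<in> Kset A k ?z"
    then have "in_block c j (c ! j + t)" "in_block c j (Suc (c ! j + t))"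
      using j by (auto simp: Kset_def in_block_def k_def c_def)
    moreover have "c ! j + t \<in> Kset A n x" using t k by (auto simp: Kset_def segment_def)
    ultimately show False using not_Kset_in_block[OF n] by (simp add: c_def)
  qed
  then have "Kset A k ?z = {}" by blast
  then show "region_of A k ?z \<in> Rle A k 1"
    using sign_cell_Rle[OF _ z] k(1) region_of_eq_sign_cell[OF z(1)] by simp
qed

lemma phi_pt_eq_Rle:
  assumes n: "n \<ge> 1" and D: "D \<in> Rle A n l" and xy: "x \<in> D" "y \<in> D"
  shows "phi_pt A n x = phi_pt A n y"
proof -
  have x: "x \<in> complement A n" "x \<in> dominant n" and y: "y \<in> complement A n"
    using Rle_memD[OF D] xy by auto
  have xy_side: "same_side A n x y" using Rle_memD(3)[OF D xy(1)] xy(2) by (simp add: sign_cell_def)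
  have cuts: "cuts A n y = cuts A n x" using Kset_same_side[OF xy_side] by (simp add: cuts_def)
  have "region_of A k (segment x (cuts A n x ! j) k) = region_of A k (segment y (cuts A n x ! j) k)"
    if j: "Suc j < length (cuts A n x)" and k: "k = cuts A n x ! Suc j - cuts A n x ! j" for j k
  proof -
    have sk: "cuts A n x ! j + k \<le> n" using segment_region_Rle_1(2)[OF n x j] k by simp
    have "segment y (cuts A n x ! j) k \<in> sign_cell A k (segment x (cuts A n x ! j) k)"
      using same_side_segment[OF xy_side sk] segment_Rn by (simp add: sign_cell_def)
    then show ?thesis
      using region_of_eq_sign_cell segment_complement[OF x(1) sk] segment_complement[OF y sk]
        sign_cell_eq by metis
  qed
  then show ?thesis unfolding phi_pt_conv cuts by simp
qed

lemma phi_pt_Rle_1: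
  assumes "n \<ge> 1" "D \<in> Rle A n l" "x \<in> D" "p \<in> set (phi_pt A n x)"
  shows "fst p > 0" "snd p \<in> Rle A (fst p) 1"
  using assms(4) segment_region_Rle_1(1,3)[OF assms(1) Rle_memD(1,2)[OF assms(2,3)]]
  by (auto simp: phi_pt_conv)

lemma phi_pt_in_target:
  assumes n: "n \<ge> 1" and D: "D \<in> Rle A n l" and x: "x \<in> D"
  shows "phi_pt A n x \<in> target A n l"
proof -
  define c where "c = cuts A n x"
  define L where "L = length c - 1"
  have "length (phi_pt A n x) = l"
    using length_phi_pt length_cuts card_Kset_Rle[OF assms] Rle_memD(4)[OF D x]
      level_dominant_cell[OF n Rle_memD(1,2)[OF D x]] Rle_memD(3)[OF D x] by simp
  moreover have "sum_list (map fst (phi_pt A n x)) = (\<Sum>j<L. c ! Suc j - c ! j)"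
    by (simp add: phi_pt_conv c_def L_def interv_sum_list_conv_sum_set_nat atLeast0LessThan)
  moreover have "(\<Sum>j<L. c ! Suc j - c ! j) = n"
    using sum_nth_diffs[of c L] sorted_cuts[OF n] cuts_nth_0 last_cuts cuts_nonempty
    by (simp add: c_def L_def strict_sorted_iff last_conv_nth)
  ultimately show ?thesis using phi_pt_Rle_1[OF n D x] by (simp add: target_def)
qed

end

context catalan_deformation
begin

lemma same_side_by_segments:
  assumes n: "n \<ge> 1" and x: "x \<in> dominant n" and y: "y \<in> dominant n"
    and cuts: "cuts A n y = cuts A n x"
    and seg: "\<And>j. Suc j < length (cuts A n x) \<Longrightarrow>
      same_side A (cuts A n x ! Suc j - cuts A n x ! j)
        (segment x (cuts A n x ! j) (cuts A n x ! Suc j - cuts A n x ! j))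
        (segment y (cuts A n x ! j) (cuts A n x ! Suc j - cuts A n x ! j))"
  shows "same_side A n x y"
  unfolding same_side_def
proof (intro allI impI)
  fix a b h assume ab: "a < b" "b < n" and h: "h \<in> hyp_values A"
  let ?c = "cuts A n x"
  show "sgn (x a - x b - h) = sgn (y a - y b - h)"
  proof (rule pairwise_by_blocks[OF sorted_cuts[OF n] cuts_nonempty cuts_nth_0 last_cuts _ _ ab])
    fix j a b assume blocks: "in_block ?c j a" "in_block ?c j b" "a < b"
    let ?s = "?c ! j" and ?k = "?c ! Suc j - ?c ! j"
    have "a - ?s < b - ?s" "b - ?s < ?k" using blocks by (auto simp: in_block_def)
    from seg[unfolded same_side_def, rule_format, OF _ this h]
    show "sgn (x a - x b - h) = sgn (y a - y b - h)"
      using blocks segment_in_block[of ?c j] by (simp add: in_block_def)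
  next
    fix ja jb a b assume "in_block ?c ja a" "in_block ?c jb b" "ja < jb"
    then have "x a - x b > Max A" "y a - y b > Max A"
      using cuts_blocks_separated[OF n x] cuts_blocks_separated[OF n y] cuts by auto
    then show "sgn (x a - x b - h) = sgn (y a - y b - h)" using sgn_diff_hyp_value h by simp
  qed
qed

lemma cuts_eq_if_phi_pt_eq:
  assumes n: "n \<ge> 1" and eq: "phi_pt A n x = phi_pt A n y"
  shows "cuts A n x = cuts A n y"
proof -
  let ?c = "cuts A n x" and ?d = "cuts A n y"
  have len: "length ?c = length ?d"
    using arg_cong[OF eq, of length] length_cuts[of A n x] length_cuts[of A n y]
    by (simp add: length_phi_pt)
  have diffs: "?c ! Suc t - ?c ! t = ?d ! Suc t - ?d ! t" if "Suc t < length ?c" for t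
    using arg_cong[OF eq, of "\<lambda>ps. fst (ps ! t)"] nth_phi_pt[OF that] nth_phi_pt[of t A n y] len that
    by simp
  show ?thesis
  proof (rule nth_equalityI[OF len])
    fix j assume j: "j < length ?c"
    have "?c ! j = (\<Sum>t<j. ?c ! Suc t - ?c ! t)" "?d ! j = (\<Sum>t<j. ?d ! Suc t - ?d ! t)"
      using sum_nth_diffs[of ?c j] sum_nth_diffs[of ?d j] sorted_cuts[OF n] j len cuts_nth_0
      by (simp_all add: strict_sorted_iff)
    then show "?c ! j = ?d ! j" using diffs j by simp
  qed
qed

lemma phi_pt_inj:
  assumes n: "n \<ge> 1" and D: "D \<in> Rle A n l" "x \<in> D" and E: "E \<in> Rle A n l'" "y \<in> E"
    and eq: "phi_pt A n x = phi_pt A n y"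
  shows "D = E"
proof -
  have x: "x \<in> complement A n" "x \<in> dominant n" and y: "y \<in> complement A n" "y \<in> dominant n"
    using Rle_memD[OF D] Rle_memD[OF E] by auto
  have cuts: "cuts A n y = cuts A n x" using cuts_eq_if_phi_pt_eq[OF n eq] by simp
  have "same_side A n x y"
  proof (rule same_side_by_segments[OF n x(2) y(2) cuts])
    fix j assume j: "Suc j < length (cuts A n x)"
    define s where "s = cuts A n x ! j"
    define k where "k = cuts A n x ! Suc j - cuts A n x ! j"
    have sk: "s + k \<le> n" using segment_region_Rle_1(2)[OF n x j] by (simp add: s_def k_def)
    have "sign_cell A k (segment x s k) = sign_cell A k (segment y s k)"
      using arg_cong[OF eq, of "\<lambda>ps. snd (ps ! j)"] nth_phi_pt[OF j] nth_phi_pt[of j A n y] j cuts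
        region_of_eq_sign_cell[OF segment_complement[OF x(1) sk]]
        region_of_eq_sign_cell[OF segment_complement[OF y(1) sk]]
      by (simp add: s_def k_def)
    then show "same_side A k (segment x s k) (segment y s k)"
      using self_in_sign_cell[OF segment_Rn[of y s k], of A] unfolding sign_cell_def by blast
  qed
  then have "sign_cell A n y = sign_cell A n x"
    using y(1) by (intro sign_cell_eq) (simp add: sign_cell_def complement_def)
  then show ?thesis using Rle_memD(3)[OF D] Rle_memD(3)[OF E] by simp
qed

end

lemma cuts_eqI:
  assumes n: "n \<ge> 1" and c: "sorted_wrt (<) c" "c \<noteq> []" "c ! 0 = 0" "last c = n"
    and K: "Kset A n x = {k. k + 1 < n \<and> Suc k \<in> set c}"
  shows "cuts A n x = c"
proof (rule sorted_distinct_set_unique)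
  show "sorted (cuts A n x)" "distinct (cuts A n x)" "sorted c" "distinct c"
    using sorted_cuts[OF n] c(1) by (auto simp: strict_sorted_iff)
  have "0 \<in> set c" "n \<in> set c" using c by (metis nth_mem length_greater_0_conv, metis last_in_set)
  moreover have "v \<in> insert 0 (insert n (Suc ` Kset A n x))" if v: "v \<in> set c" for v
  proof -
    obtain t where t: "t < length c" "c ! t = v" using v by (auto simp: in_set_conv_nth)
    have "c ! t \<le> c ! (length c - 1)"
      using strict_sorted_nth_le_iff[OF c(1) t(1), of "length c - 1"] t(1) by simp
    then have "v \<le> n" using t c(2,4) by (simp add: last_conv_nth)
    then show ?thesis using v K by (cases v) auto
  qed
  ultimately show "set (cuts A n x) = set c" using K by (auto simp: set_cuts)
qed

definition composition_cuts :: "nat list \<Rightarrow> nat list" where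
  "composition_cuts ns = map (\<lambda>j. sum_list (take j ns)) [0..<Suc (length ns)]"

lemma length_composition_cuts: "length (composition_cuts ns) = Suc (length ns)"
  by (simp add: composition_cuts_def)

lemma composition_cuts_nth: "j \<le> length ns \<Longrightarrow> composition_cuts ns ! j = sum_list (take j ns)"
  by (simp add: composition_cuts_def nth_upt del: upt_Suc)

lemma composition_cuts_nth_Suc:
  "j < length ns \<Longrightarrow> composition_cuts ns ! Suc j = composition_cuts ns ! j + ns ! j"
  by (simp add: composition_cuts_nth take_Suc_conv_app_nth)

lemma composition_cuts_props:
  assumes "\<forall>k\<in>set ns. k > 0"
  shows "sorted_wrt (<) (composition_cuts ns)" "composition_cuts ns \<noteq> []"
    "composition_cuts ns ! 0 = 0" "last (composition_cuts ns) = sum_list ns"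
proof -
  have "\<forall>i. Suc i < length (composition_cuts ns) \<longrightarrow>
      composition_cuts ns ! i < composition_cuts ns ! Suc i"
    using assms composition_cuts_nth_Suc by (auto simp: length_composition_cuts)
  then show "sorted_wrt (<) (composition_cuts ns)" by (simp add: sorted_wrt_iff_nth_Suc_transp)
  show "composition_cuts ns \<noteq> []" "composition_cuts ns ! 0 = 0"
    by (simp_all add: composition_cuts_def nth_Cons' del: upt_Suc)
  show "last (composition_cuts ns) = sum_list ns"
    by (simp add: composition_cuts_def last_map del: upt_Suc)
qed

definition glue :: "nat list \<Rightarrow> (nat \<Rightarrow> nat \<Rightarrow> real) \<Rightarrow> real \<Rightarrow> nat \<Rightarrow> real" where
  "glue c w G i = (\<Sum>j<length c - 1. if in_block c j i then w j (i - c ! j) - real j * G else 0)"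

lemma glue_in_block:
  assumes "sorted_wrt (<) c" "in_block c j i"
  shows "glue c w G i = w j (i - c ! j) - real j * G"
proof -
  have "length c = Suc (length c - 1)" using assms(2) by (auto simp: in_block_def)
  from sum_in_block[OF assms this, of "\<lambda>j. w j (i - c ! j) - real j * G"] show ?thesis
    by (simp add: glue_def)
qed

lemma glue_Rn:
  assumes "sorted_wrt (<) c" "c \<noteq> []" "last c = n"
  shows "glue c w G \<in> Rn n"
proof -
  have "\<not> in_block c j i" if "n \<le> i" for i j
    using that assms strict_sorted_nth_le_iff[OF assms(1), of "Suc j" "length c - 1"]
    by (auto simp: in_block_def last_conv_nth)
  then show ?thesis by (simp add: glue_def Rn_def)
qed

lemma glue_segment_in_sign_cell:
  assumes "sorted_wrt (<) c" "Suc j < length c"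
  defines "k \<equiv> c ! Suc j - c ! j"
  shows "segment (glue c w G) (c ! j) k \<in> sign_cell A k (w j)"
proof -
  have "same_side A k (w j) (segment (glue c w G) (c ! j) k)"
    unfolding same_side_def
  proof (intro allI impI)
    fix a b h assume ab: "a < b" "b < k"
    then have "in_block c j (c ! j + a)" "in_block c j (c ! j + b)"
      using assms(2) by (auto simp: in_block_def k_def)
    then show "sgn (w j a - w j b - h) =
        sgn (segment (glue c w G) (c ! j) k a - segment (glue c w G) (c ! j) k b - h)"
      using ab glue_in_block[OF assms(1)] by (simp add: segment_def)
  qed
  then show ?thesis using segment_Rn by (simp add: sign_cell_def)
qed

lemma glue_separated:
  assumes "sorted_wrt (<) c" "in_block c ja a" "in_block c jb b" "ja < jb"
    and "\<bar>w ja (a - c ! ja)\<bar> \<le> C" "\<bar>w jb (b - c ! jb)\<bar> \<le> C" "M \<ge> 0"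
  shows "glue c w (2 * C + M + 1) a - glue c w (2 * C + M + 1) b > M"
proof -
  define G where "G = 2 * C + M + 1"
  define D where "D = (real jb - real ja) * G"
  define u v where "u = w ja (a - c ! ja)" and "v = w jb (b - c ! jb)"
  have "glue c w G a - glue c w G b = u - v + D"
    unfolding D_def u_def v_def glue_in_block[OF assms(1,2)] glue_in_block[OF assms(1,3)]
    by (simp add: algebra_simps)
  moreover have "G \<ge> 0" using assms(5,7) by (simp add: G_def)
  then have "1 * G \<le> D" unfolding D_def using assms(4) by (intro mult_right_mono) auto
  moreover have "- C \<le> u" "v \<le> C" using assms(5,6) by (auto simp: u_def v_def)
  ultimately have "glue c w G a - glue c w G b > M" using G_def by linarith
  then show ?thesis by (simp add: G_def)
qed

context catalan_deformation
begin

lemma complement_by_blocks: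
  assumes c: "sorted_wrt (<) c" "c \<noteq> []" "c ! 0 = 0" "last c = n" and x: "x \<in> Rn n"
    and blocks: "\<And>j. Suc j < length c \<Longrightarrow>
      segment x (c ! j) (c ! Suc j - c ! j) \<in> complement A (c ! Suc j - c ! j)"
    and sep: "\<And>ja jb a b. in_block c ja a \<Longrightarrow> in_block c jb b \<Longrightarrow> ja < jb \<Longrightarrow> x a - x b > Max A"
  shows "x \<in> complement A n"
  unfolding complement_iff
proof (intro conjI allI impI x)
  fix a b assume ab: "a < b" "b < n"
  show "x a - x b \<notin> hyp_values A"
  proof (rule pairwise_by_blocks[OF c _ _ ab])
    fix j a b assume ab': "in_block c j a" "in_block c j b" "a < b"
    let ?z = "segment x (c ! j) (c ! Suc j - c ! j)"
    have "a - c ! j < b - c ! j" "b - c ! j < c ! Suc j - c ! j"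
      using ab' by (auto simp: in_block_def diff_less_mono)
    then have "?z (a - c ! j) - ?z (b - c ! j) \<notin> hyp_values A"
      using blocks[of j] ab'(1) unfolding complement_iff in_block_def by blast
    then show "x a - x b \<notin> hyp_values A"
      using segment_in_block(2)[OF ab'(1), of x] segment_in_block(2)[OF ab'(2), of x] by simp
  next
    fix ja jb a b assume "in_block c ja a" "in_block c jb b" "ja < jb"
    then show "x a - x b \<notin> hyp_values A" using sep abs_hyp_value_le by force
  qed
qed

lemma dominant_by_blocks:
  assumes c: "sorted_wrt (<) c" "c \<noteq> []" "c ! 0 = 0" "last c = n"
    and blocks: "\<And>j. Suc j < length c \<Longrightarrow>
      segment x (c ! j) (c ! Suc j - c ! j) \<in> dominant (c ! Suc j - c ! j)"
    and sep: "\<And>ja jb a b. in_block c ja a \<Longrightarrow> in_block c jb b \<Longrightarrow> ja < jb \<Longrightarrow> x a - x b > Max A"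
  shows "x \<in> dominant n"
proof -
  have "Suc i = Suc i \<longrightarrow> x (Suc i) < x i" if "Suc i < n" for i
  proof (rule pairwise_by_blocks[where P = "\<lambda>a b. b = Suc a \<longrightarrow> x b < x a", OF c _ _ _ that])
    fix j a b assume ab: "in_block c j a" "in_block c j b" "a < b"
    show "b = Suc a \<longrightarrow> x b < x a"
    proof
      assume "b = Suc a"
      then have i: "Suc (a - c ! j) < c ! Suc j - c ! j" and "Suc (a - c ! j) = b - c ! j"
        using ab by (auto simp: in_block_def)
      have "\<forall>i. Suc i < c ! Suc j - c ! j \<longrightarrow> segment x (c ! j) (c ! Suc j - c ! j) (Suc i)
          < segment x (c ! j) (c ! Suc j - c ! j) i"
        using blocks[of j] ab(1) by (simp add: dominant_def in_block_def)
      from this[rule_format, OF i] \<open>Suc (a - c ! j) = b - c ! j\<close>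
      have "segment x (c ! j) (c ! Suc j - c ! j) (b - c ! j)
          < segment x (c ! j) (c ! Suc j - c ! j) (a - c ! j)" by simp
      then show "x b < x a" using segment_in_block(2)[OF ab(1), of x] segment_in_block(2)[OF ab(2), of x]
        by simp
    qed
  next
    fix ja jb a b assume "in_block c ja a" "in_block c jb b" "ja < jb"
    then have "x a - x b > Max A" by (rule sep)
    then show "b = Suc a \<longrightarrow> x b < x a" using Max_A_pos by auto
  qed simp
  then show ?thesis by (simp add: dominant_def)
qed

lemma Kset_by_blocks:
  assumes c: "sorted_wrt (<) c" "c \<noteq> []" "c ! 0 = 0" "last c = n"
    and blocks: "\<And>j. Suc j < length c \<Longrightarrow>
      Kset A (c ! Suc j - c ! j) (segment x (c ! j) (c ! Suc j - c ! j)) = {}"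
    and sep: "\<And>ja jb a b. in_block c ja a \<Longrightarrow> in_block c jb b \<Longrightarrow> ja < jb \<Longrightarrow> x a - x b > Max A"
  shows "Kset A n x = {k. k + 1 < n \<and> Suc k \<in> set c}"
proof (intro set_eqI)
  fix k
  show "k \<in> Kset A n x \<longleftrightarrow> k \<in> {k. k + 1 < n \<and> Suc k \<in> set c}"
  proof (cases "k + 1 < n")
    case True
    then obtain ja jb where jab: "in_block c ja k" "in_block c jb (Suc k)"
      using in_block_exists[OF c(1,2)] c(3,4) by (metis Suc_eq_plus1 le0 Suc_lessD)
    have "ja \<le> jb" using in_block_mono[OF c(1) jab] by simp
    moreover have "k \<notin> Kset A n x" if "ja = jb"
    proof
      assume "k \<in> Kset A n x"
      then have "k - c ! ja \<in> Kset A (c ! Suc ja - c ! ja) (segment x (c ! ja) (c ! Suc ja - c ! ja))"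
        using jab that by (auto simp: Kset_def segment_def in_block_def Suc_diff_le)
      then show False using blocks[of ja] jab by (simp add: in_block_def)
    qed
    moreover have "k \<in> Kset A n x" if "ja < jb" using sep[OF jab that] True by (simp add: Kset_def)
    ultimately show ?thesis using in_block_Suc_cut_iff[OF c(1) jab] True by (cases "ja = jb") auto
  qed (simp add: Kset_def)
qed

end

lemma region_of_eqI:
  assumes "D \<in> regions A m" "y \<in> D"
  shows "region_of A m y = D"
proof -
  obtain x where x: "x \<in> complement A m" "D = sign_cell A m x"
    using assms(1) by (auto simp: regions_eq_sign_cells)
  then have "y \<in> complement A m" using assms(2) sign_cell_subset_complement by blast
  then show ?thesis using region_of_eq_sign_cell sign_cell_eq x assms(2) by metis
qed

lemma phi_pt_eqI:
  assumes "cuts A n x = c" "length c = Suc (length ps)"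
    and "\<And>j. j < length ps \<Longrightarrow> c ! Suc j - c ! j = fst (ps ! j) \<and>
      snd (ps ! j) \<in> regions A (fst (ps ! j)) \<and> segment x (c ! j) (fst (ps ! j)) \<in> snd (ps ! j)"
  shows "phi_pt A n x = ps"
proof (rule nth_equalityI)
  show "length (phi_pt A n x) = length ps" using length_phi_pt assms(1,2) by simp
  fix j assume "j < length (phi_pt A n x)"
  then have j: "j < length ps" "Suc j < length (cuts A n x)" using length_phi_pt assms(1,2) by auto
  then show "phi_pt A n x ! j = ps ! j"
    using nth_phi_pt[OF j(2)] assms(1) assms(3)[OF j(1)] region_of_eqI by (simp add: prod_eq_iff)
qed

lemma bounded_finite_family:
  fixes l :: nat and k :: "nat \<Rightarrow> nat" and f :: "nat \<Rightarrow> nat \<Rightarrow> real"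
  shows "\<exists>C. \<forall>j<l. \<forall>t<k j. \<bar>f j t\<bar> \<le> C"
proof (intro exI allI impI)
  fix j t assume "j < l" "t < k j"
  then have "\<bar>f j t\<bar> \<le> (\<Sum>t<k j. \<bar>f j t\<bar>)" by (intro member_le_sum) simp_all
  also have "\<dots> \<le> (\<Sum>j<l. \<Sum>t<k j. \<bar>f j t\<bar>)"
    using \<open>j < l\<close> by (intro member_le_sum sum_nonneg) auto
  finally show "\<bar>f j t\<bar> \<le> (\<Sum>j<l. \<Sum>t<k j. \<bar>f j t\<bar>)" .
qed

context catalan_deformation
begin

lemma Rle_1_memD:
  assumes "D \<in> Rle A k 1" "k \<ge> 1" "w \<in> D"
  shows "D = sign_cell A k w" "w \<in> complement A k" "w \<in> dominant k" "Kset A k w = {}"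
proof -
  show "D = sign_cell A k w" "w \<in> complement A k" "w \<in> dominant k"
    using Rle_memD[OF assms(1,3)] by simp_all
  have "card (Kset A k w) = 0" using card_Kset_Rle[OF assms(2,1,3)] by simp
  then show "Kset A k w = {}" using finite_Kset by simp
qed

lemma glue_cuts:
  assumes n: "n \<ge> 1" and c: "sorted_wrt (<) c" "c \<noteq> []" "c ! 0 = 0" "last c = n"
    and w: "\<And>j. Suc j < length c \<Longrightarrow> w j \<in> complement A (c ! Suc j - c ! j) \<and>
      w j \<in> dominant (c ! Suc j - c ! j) \<and> Kset A (c ! Suc j - c ! j) (w j) = {}"
    and C: "\<And>j t. Suc j < length c \<Longrightarrow> t < c ! Suc j - c ! j \<Longrightarrow> \<bar>w j t\<bar> \<le> C"
  defines "x \<equiv> glue c w (2 * C + Max A + 1)"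
  shows "x \<in> complement A n" "x \<in> dominant n" "cuts A n x = c"
proof -
  have sep: "x a - x b > Max A" if "in_block c ja a" "in_block c jb b" "ja < jb" for ja jb a b
    unfolding x_def using that Max_A_pos
    by (intro glue_separated[OF c(1)] C) (auto simp: in_block_def)
  have blocks: "segment x (c ! j) (c ! Suc j - c ! j) \<in> complement A (c ! Suc j - c ! j) \<and>
      segment x (c ! j) (c ! Suc j - c ! j) \<in> dominant (c ! Suc j - c ! j) \<and>
      Kset A (c ! Suc j - c ! j) (segment x (c ! j) (c ! Suc j - c ! j)) = {}"
    if j: "Suc j < length c" for j
  proof -
    have "segment x (c ! j) (c ! Suc j - c ! j) \<in> sign_cell A (c ! Suc j - c ! j) (w j)"
      unfolding x_def by (rule glue_segment_in_sign_cell[OF c(1) j])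
    then show ?thesis using w[OF j] sign_cell_subset_complement sign_cell_subset_dominant
      Kset_same_side by (fastforce simp: sign_cell_def)
  qed
  have xR: "x \<in> Rn n" unfolding x_def by (rule glue_Rn[OF c(1,2,4)])
  show "x \<in> complement A n" by (rule complement_by_blocks[OF c xR _ sep]) (use blocks in blast)
  show "x \<in> dominant n" by (rule dominant_by_blocks[OF c _ sep]) (use blocks in blast)
  show "cuts A n x = c"
    by (rule cuts_eqI[OF n c Kset_by_blocks[OF c _ sep]]) (use blocks in blast)
qed

lemma target_realised:
  assumes n: "n \<ge> 1" and ps: "ps \<in> target A n l"
  shows "\<exists>x. x \<in> complement A n \<and> x \<in> dominant n \<and> card (Kset A n x) + 1 = l \<and>
    phi_pt A n x = ps"
proof -
  define c where "c = composition_cuts (map fst ps)"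
  have lps: "length ps = l" and sum: "sum_list (map fst ps) = n"
    and blocks: "\<And>j. j < l \<Longrightarrow> fst (ps ! j) > 0 \<and> snd (ps ! j) \<in> Rle A (fst (ps ! j)) 1"
    using ps by (auto simp: target_def)
  have "\<forall>k\<in>set (map fst ps). k > 0" using ps by (auto simp: target_def)
  then have c: "sorted_wrt (<) c" "c \<noteq> []" "c ! 0 = 0" "last c = n"
    using composition_cuts_props sum by (simp_all add: c_def)
  have lc: "length c = Suc l" by (simp add: c_def length_composition_cuts lps)
  have k: "c ! Suc j - c ! j = fst (ps ! j)" if "j < l" for j
    using composition_cuts_nth_Suc[of j "map fst ps"] that lps by (simp add: c_def)
  define w where "w j = (SOME y. y \<in> snd (ps ! j))" for j
  have w: "w j \<in> snd (ps ! j)" if "j < l" for j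
    unfolding w_def using Rle_nonempty blocks[OF that] by (metis someI_ex)
  have w_props: "snd (ps ! j) = sign_cell A (fst (ps ! j)) (w j)" "w j \<in> complement A (fst (ps ! j))"
    "w j \<in> dominant (fst (ps ! j))" "Kset A (fst (ps ! j)) (w j) = {}" if "j < l" for j
    using Rle_1_memD[OF conjunct2[OF blocks[OF that]] _ w[OF that]] blocks[OF that]
    by (simp_all add: Suc_le_eq)
  obtain C where C: "\<forall>j<l. \<forall>t<fst (ps ! j). \<bar>w j t\<bar> \<le> C"
    using bounded_finite_family[of l "\<lambda>j. fst (ps ! j)" w] by blast
  have "w j \<in> complement A (c ! Suc j - c ! j) \<and> w j \<in> dominant (c ! Suc j - c ! j) \<and>
      Kset A (c ! Suc j - c ! j) (w j) = {}" if "Suc j < length c" for j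
    using w_props(2-4)[of j] k[of j] that lc by simp
  moreover have "\<bar>w j t\<bar> \<le> C" if "Suc j < length c" "t < c ! Suc j - c ! j" for j t
    using C that k lc by simp
  moreover define x where "x = glue c w (2 * C + Max A + 1)"
  ultimately have x: "x \<in> complement A n" "x \<in> dominant n" "cuts A n x = c"
    using glue_cuts[OF n c] by blast+
  moreover have "card (Kset A n x) + 1 = l" using length_cuts[of A n x] x(3) lc by simp
  moreover have "phi_pt A n x = ps"
  proof (rule phi_pt_eqI[OF x(3)])
    fix j assume j: "j < length ps"
    have "segment x (c ! j) (fst (ps ! j)) \<in> snd (ps ! j)"
      using glue_segment_in_sign_cell[OF c(1), of j w] x_def w_props(1) j lc k lps by simp
    then show "c ! Suc j - c ! j = fst (ps ! j) \<and> snd (ps ! j) \<in> regions A (fst (ps ! j)) \<and>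
        segment x (c ! j) (fst (ps ! j)) \<in> snd (ps ! j)"
      using k blocks j lps by (simp add: Rle_def)
  qed (simp add: lc lps)
  ultimately show ?thesis by blast
qed

lemma some_in_Rle: "D \<in> Rle A n l \<Longrightarrow> (SOME x. x \<in> D) \<in> D"
  using Rle_nonempty by (metis someI_ex)

lemma phi_pt_image_Rle:
  assumes n: "n \<ge> 1"
  shows "(\<lambda>D. phi_pt A n (SOME x. x \<in> D)) ` Rle A n l = target A n l"
proof (intro equalityI subsetI)
  fix ps assume "ps \<in> (\<lambda>D. phi_pt A n (SOME x. x \<in> D)) ` Rle A n l"
  then show "ps \<in> target A n l" using phi_pt_in_target[OF n] some_in_Rle by blast
next
  fix ps assume "ps \<in> target A n l"
  then obtain x where x: "x \<in> complement A n" "x \<in> dominant n" "card (Kset A n x) + 1 = l"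
    "phi_pt A n x = ps" using target_realised[OF n] by blast
  then have D: "sign_cell A n x \<in> Rle A n l" using sign_cell_Rle[OF n x(1,2)] by simp
  have "x \<in> sign_cell A n x" using x(1) by (simp add: complement_def self_in_sign_cell)
  then have "phi_pt A n (SOME y. y \<in> sign_cell A n x) = ps"
    using phi_pt_eq_Rle[OF n D some_in_Rle[OF D]] x(4) by simp
  then show "ps \<in> (\<lambda>D. phi_pt A n (SOME x. x \<in> D)) ` Rle A n l" using D by blast
qed

lemma inj_on_phi_pt_Rle:
  assumes n: "n \<ge> 1"
  shows "inj_on (\<lambda>D. phi_pt A n (SOME x. x \<in> D)) (Rle A n l)"
  using phi_pt_inj[OF n _ some_in_Rle _ some_in_Rle] by (intro inj_onI) blast

end

theorem lemma3p3:
  fixes A :: "real set" and n l :: nat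
  assumes "finite A" and "A \<noteq> {}" and "\<forall>a\<in>A. a > 0"
    and "n \<ge> 1" and "l \<ge> 1"
  shows "(\<forall>D\<in>Rle A n l. \<forall>x\<in>D. card (Kset A n x) = l - 1)
       \<and> (\<forall>D\<in>Rle A n l. \<forall>x\<in>D. \<forall>y\<in>D. phi_pt A n x = phi_pt A n y)
       \<and> (\<forall>D\<in>Rle A n l. \<forall>x\<in>D. \<forall>p\<in>set (phi_pt A n x). snd p \<in> Rle A (fst p) 1)
       \<and> bij_betw (\<lambda>D. phi_pt A n (SOME x. x \<in> D)) (Rle A n l) (target A n l)"
proof -
  interpret catalan_deformation A using assms(1-3) by unfold_locales
  have "bij_betw (\<lambda>D. phi_pt A n (SOME x. x \<in> D)) (Rle A n l) (target A n l)"
    using inj_on_phi_pt_Rle[OF assms(4)] phi_pt_image_Rle[OF assms(4)] by (simp add: bij_betw_def)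
  then show ?thesis
    by (intro conjI ballI card_Kset_Rle[OF assms(4)] phi_pt_eq_Rle[OF assms(4)]
        phi_pt_Rle_1(2)[OF assms(4)])
qed

end
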